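(* Let $(D,\mathfrak m,\Bbbk)$ be a $d$-dimensional local domain with fraction field $\mathbb F$ and let $\nu:\mathbb F^\times\to\mathbb Z^d$ be a valuation OK relative to $D$, with residue field $\Bbbk_V$ and $S=\nu(D\setminus0)$. Then there exists $\mathbf u\in S$ such that \[\nu(M\setminus0)+\mathbf u\subseteq\nu^{(h)}(M)\subseteq\nu(M\setminus0)\] for every $D$-submodule $M$ of $\mathbb F$ and every integer $1\le h\le[\Bbbk_V:\Bbbk]$.
   Context: Fix $\mathbf a\in\mathbb R^d$ with $\mathbb Q$-linearly independent coordinates; order $\mathbb Z^d$ by $\mathbf u\le\mathbf v$ iff $\langle\mathbf u,\mathbf a\rangle\le\langle\mathbf v,\mathbf a\rangle$. A valuation on $\mathbb F$ with value group $\mathbb Z^d$ is a surjective homomorphism $\nu:\mathbb F^\times\to\mathbb Z^d$ with $\nu(x+y)\ge\min\{\nu(x),\nu(y)\}$ whenever $x,y,x+y\ne0$; $\mathbb F_{\ge\mathbf u}=\{0\}\cup\{x:\nu(x)\ge\mathbf u\}$, $\mathbb F_{>\mathbf u}$ similarly; $V=\mathbb F_{\ge\mathbf0}$, maximal ideal $\mathfrak m_V$, residue field $\Bbbk_V$. $\nu$ is OK relative to $D$ if (i) $D\subseteq V$, $\mathfrak m=\mathfrak m_V\cap D$; (ii) $\langle\mathbf u,\mathbf a\rangle>0$ for all nonzero $\mathbf u$ in the closed convex cone generated by $\nu(D\setminus 0)$; (iii) $[\Bbbk_V:\Bbbk]<\infty$; (iv) some $\mathbf v\in\mathbb Z^d$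 has $D\cap\mathbb F_{\ge n\mathbf v}\subseteq\mathfrak m^n$ for all $n\ge0$. For a $D$-submodule $M\subseteq\mathbb F$ and $1\le h\le[\Bbbk_V:\Bbbk]$, $\nu^{(h)}(M)$ is the set of $\mathbf u\in\mathbb Z^d$ with $\dim_\Bbbk\big((M\cap\mathbb F_{\ge\mathbf u})/(M\cap\mathbb F_{>\mathbf u})\big)\ge h$. *)

theory Defs
  imports "HOL-Analysis.Analysis"
begin

definition subring :: "'f::field set \<Rightarrow> bool" where
  "subring D \<longleftrightarrow> 0 \<in> D \<and> 1 \<in> D \<and> (\<forall>x\<in>D. \<forall>y\<in>D. x + y \<in> D \<and> x - y \<in> D \<and> x * y \<in> D)"

definition is_fraction_field_of :: "'f::field set \<Rightarrow> bool" where
  "is_fraction_field_of D \<longleftrightarrow> (\<forall>x::'f. \<exists>a\<in>D. \<exists>b\<in>D. b \<noteq> 0 \<and> x = a / b)"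

definition ideal_of :: "'f::field set \<Rightarrow> 'f set \<Rightarrow> bool" where
  "ideal_of D I \<longleftrightarrow> I \<subseteq> D \<and> 0 \<in> I \<and> (\<forall>x\<in>I. \<forall>y\<in>I. x + y \<in> I)
      \<and> (\<forall>r\<in>D. \<forall>x\<in>I. r * x \<in> I)"

definition ideal_gen :: "'f::field set \<Rightarrow> 'f set \<Rightarrow> 'f set" where
  "ideal_gen D S = \<Inter> {I. ideal_of D I \<and> S \<subseteq> I}"

definition maximal_ideal :: "'f::field set \<Rightarrow> 'f set \<Rightarrow> bool" where
  "maximal_ideal D I \<longleftrightarrow> ideal_of D I \<and> I \<noteq> D \<and>
      (\<forall>J. ideal_of D J \<and> I \<subseteq> J \<longrightarrow> J = I \<or> J = D)"

definition prime_ideal :: "'f::field set \<Rightarrow> 'f set \<Rightarrow> bool" where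
  "prime_ideal D P \<longleftrightarrow> ideal_of D P \<and> P \<noteq> D \<and>
      (\<forall>x\<in>D. \<forall>y\<in>D. x * y \<in> P \<longrightarrow> x \<in> P \<or> y \<in> P)"

definition noetherian :: "'f::field set \<Rightarrow> bool" where
  "noetherian D \<longleftrightarrow> (\<forall>I. ideal_of D I \<longrightarrow> (\<exists>G. finite G \<and> G \<subseteq> I \<and> ideal_gen D G = I))"

definition local_ring :: "'f::field set \<Rightarrow> bool" where
  "local_ring D \<longleftrightarrow> (\<exists>!I. maximal_ideal D I)"

definition krull_dim :: "'f::field set \<Rightarrow> enat" where
  "krull_dim D = Sup {enat n | n. \<exists>P::nat \<Rightarrow> 'f set.
      (\<forall>i\<le>n. prime_ideal D (P i)) \<and> (\<forall>i<n. P i \<subset> P (Suc i))}"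

fun ideal_pow :: "'f::field set \<Rightarrow> 'f set \<Rightarrow> nat \<Rightarrow> 'f set" where
  "ideal_pow D I 0 = D"
| "ideal_pow D I (Suc n) = ideal_gen D {x * y | x y. x \<in> ideal_pow D I n \<and> y \<in> I}"

definition submodule :: "'f::field set \<Rightarrow> 'f set \<Rightarrow> bool" where
  "submodule D M \<longleftrightarrow> 0 \<in> M \<and> (\<forall>x\<in>M. \<forall>y\<in>M. x + y \<in> M \<and> x - y \<in> M)
      \<and> (\<forall>r\<in>D. \<forall>x\<in>M. r * x \<in> M)"

definition lf :: "real^'d \<Rightarrow> int^'d \<Rightarrow> real" where
  "lf a u = (\<Sum>i\<in>UNIV. real_of_int (u $ i) * a $ i)"

definition rat_lin_indep :: "real^'d \<Rightarrow> bool" where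
  "rat_lin_indep a \<longleftrightarrow> (\<forall>c::'d \<Rightarrow> rat. (\<Sum>i\<in>UNIV. of_rat (c i) * a $ i) = 0 \<longrightarrow> (\<forall>i. c i = 0))"

definition valuation :: "real^'d \<Rightarrow> ('f::field \<Rightarrow> int^'d) \<Rightarrow> bool" where
  "valuation a \<nu> \<longleftrightarrow> \<nu> ` (UNIV - {0}) = UNIV
     \<and> (\<forall>x y. x \<noteq> 0 \<longrightarrow> y \<noteq> 0 \<longrightarrow> \<nu> (x * y) = \<nu> x + \<nu> y)
     \<and> (\<forall>x y. x \<noteq> 0 \<longrightarrow> y \<noteq> 0 \<longrightarrow> x + y \<noteq> 0 \<longrightarrow>
          min (lf a (\<nu> x)) (lf a (\<nu> y)) \<le> lf a (\<nu> (x + y)))"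

definition Fge :: "real^'d \<Rightarrow> ('f::field \<Rightarrow> int^'d) \<Rightarrow> int^'d \<Rightarrow> 'f set" where
  "Fge a \<nu> u = {x. x = 0 \<or> lf a u \<le> lf a (\<nu> x)}"

definition Fgt :: "real^'d \<Rightarrow> ('f::field \<Rightarrow> int^'d) \<Rightarrow> int^'d \<Rightarrow> 'f set" where
  "Fgt a \<nu> u = {x. x = 0 \<or> lf a u < lf a (\<nu> x)}"

text \<open>Dimension over the residue field k = D/m of P/N (for D-modules N \<subseteq> P with m P \<subseteq> N):
  supremum of the sizes of families in P whose images in P/N are k-linearly independent
  (scalars of k represented by lifts in D; a lift represents 0 in k iff it lies in m).\<close>
definition kdim :: "'f::field set \<Rightarrow> 'f set \<Rightarrow> 'f set \<Rightarrow> 'f set \<Rightarrow> enat" where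
  "kdim D m P N = Sup {enat n | n. \<exists>x::nat \<Rightarrow> 'f. (\<forall>i<n. x i \<in> P) \<and>
      (\<forall>c::nat \<Rightarrow> 'f. (\<forall>i<n. c i \<in> D) \<longrightarrow> (\<Sum>i<n. c i * x i) \<in> N \<longrightarrow> (\<forall>i<n. c i \<in> m))}"

text \<open>[k_V : k], where V = F_{\<ge>0}, m_V = F_{>0}.\<close>
definition res_deg :: "real^'d \<Rightarrow> ('f::field \<Rightarrow> int^'d) \<Rightarrow> 'f set \<Rightarrow> 'f set \<Rightarrow> enat" where
  "res_deg a \<nu> D m = kdim D m (Fge a \<nu> 0) (Fgt a \<nu> 0)"

definition nu_h :: "real^'d \<Rightarrow> ('f::field \<Rightarrow> int^'d) \<Rightarrow> 'f set \<Rightarrow> 'f set \<Rightarrow> nat \<Rightarrow> 'f set \<Rightarrow> (int^'d) set" where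
  "nu_h a \<nu> D m h M = {u. enat h \<le> kdim D m (M \<inter> Fge a \<nu> u) (M \<inter> Fgt a \<nu> u)}"

definition to_real :: "int^'d \<Rightarrow> real^'d" where
  "to_real u = (\<chi> i. real_of_int (u $ i))"

definition OK_valuation :: "real^'d \<Rightarrow> ('f::field \<Rightarrow> int^'d) \<Rightarrow> 'f set \<Rightarrow> 'f set \<Rightarrow> bool" where
  "OK_valuation a \<nu> D m \<longleftrightarrow>
     D \<subseteq> Fge a \<nu> 0 \<and> m = Fgt a \<nu> 0 \<inter> D
   \<and> (\<forall>u \<in> closure (convex_cone hull (to_real ` \<nu> ` (D - {0}))). u \<noteq> 0 \<longrightarrow> 0 < (\<Sum>i\<in>UNIV. u $ i * a $ i))
   \<and> res_deg a \<nu> D m < \<infinity>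
   \<and> (\<exists>v::int^'d. \<forall>n::nat. D \<inter> Fge a \<nu> (\<chi> i. int n * v $ i) \<subseteq> ideal_pow D m n)"

end

theory Submission
  imports Defs
begin

text \<open>Since [k_V : k] = n is finite, the supremum defining it is attained by elements
  t_1, ..., t_n of V that are independent modulo m_V. Clearing denominators gives b in D with all
  b t_i in D, and u = nu(b) works: for x in M the elements x b t_i lie in M and, as multiplication
  by x b shifts all values by nu(x) + u, they are independent modulo elements of value greater than
  nu(x) + u. Conversely, an element of value at least w but not greater than w has value exactly w,
  because the \<open>\<rat>\<close>-linear independence of \<open>a\<close> makes the order on \<open>\<int>\<^sup>d\<close> total.
  Only the finiteness of [k_V : k], the fraction field and the maximality of m are used; the
  Noetherian, dimension and remaining OK hypotheses are not.\<close>

lemma lf_add: "lf a (u + v) = lf a u + lf a v"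
  unfolding lf_def by (simp add: sum.distrib[symmetric] algebra_simps)

lemma inj_lf:
  fixes a :: "real^'d"
  assumes "rat_lin_indep a"
  shows "inj (lf a)"
proof (rule injI)
  fix u v :: "int^'d"
  assume "lf a u = lf a v"
  moreover have "(\<Sum>i\<in>UNIV. of_rat (of_int (u $ i - v $ i)) * a $ i) = lf a u - lf a v"
    unfolding lf_def by (simp add: sum_subtractf[symmetric] algebra_simps of_rat_diff of_rat_of_int_eq)
  ultimately have "(\<Sum>i\<in>UNIV. of_rat (of_int (u $ i - v $ i)) * a $ i) = 0"
    by simp
  then have "\<forall>i. (of_int (u $ i - v $ i) :: rat) = 0"
    using assms[unfolded rat_lin_indep_def, rule_format, of "\<lambda>i. of_int (u $ i - v $ i)"] by blast
  then show "u = v" by (simp add: vec_eq_iff)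
qed

lemma valuation_mult:
  assumes "valuation a \<nu>" "x \<noteq> 0" "y \<noteq> 0"
  shows "\<nu> (x * y) = \<nu> x + \<nu> y"
  using assms unfolding valuation_def by blast

lemma Fge_mult_iff:
  assumes "valuation a \<nu>" "y \<noteq> 0"
  shows "y * x \<in> Fge a \<nu> (u + \<nu> y) \<longleftrightarrow> x \<in> Fge a \<nu> u"
  using assms by (cases "x = 0") (auto simp: Fge_def valuation_mult lf_add)

lemma Fgt_mult_iff:
  assumes "valuation a \<nu>" "y \<noteq> 0"
  shows "y * x \<in> Fgt a \<nu> (u + \<nu> y) \<longleftrightarrow> x \<in> Fgt a \<nu> u"
  using assms by (cases "x = 0") (auto simp: Fgt_def valuation_mult lf_add)

lemma common_denominator:
  assumes "subring D" "is_fraction_field_of D" "finite X"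
  shows "\<exists>b \<in> D. b \<noteq> 0 \<and> (\<forall>x \<in> X. b * x \<in> D)"
  using assms(3)
proof (induction X rule: finite_induct)
  case empty
  show ?case using assms(1) by (intro bexI[of _ 1]) (auto simp: subring_def)
next
  case (insert x X)
  then obtain b where b: "b \<in> D" "b \<noteq> 0" "\<forall>y \<in> X. b * y \<in> D" by blast
  obtain p q where pq: "p \<in> D" "q \<in> D" "q \<noteq> 0" "x = p / q"
    using assms(2) unfolding is_fraction_field_of_def by blast
  have "q * b * x = b * p" using pq by simp
  moreover have "q * b * y \<in> D" if "y \<in> X" for y
    using assms(1) b pq that unfolding subring_def mult.assoc by blast
  ultimately have "\<forall>y \<in> insert x X. q * b * y \<in> D"
    using assms(1) b pq unfolding subring_def by auto
  moreover have "q * b \<in> D" using assms(1) b pq unfolding subring_def by auto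
  moreover have "q * b \<noteq> 0" using b pq by simp
  ultimately show ?case by blast
qed

lemma one_not_in_maximal_ideal:
  assumes "subring D" "maximal_ideal D m"
  shows "1 \<notin> m"
proof
  assume "1 \<in> m"
  then have "D \<subseteq> m"
    using assms unfolding maximal_ideal_def ideal_of_def by (metis mult.right_neutral subsetI)
  then show False using assms unfolding maximal_ideal_def ideal_of_def by blast
qed

definition lin_indep_mod :: "'f::field set \<Rightarrow> 'f set \<Rightarrow> 'f set \<Rightarrow> 'f set \<Rightarrow> nat \<Rightarrow> (nat \<Rightarrow> 'f) \<Rightarrow> bool"
  where "lin_indep_mod D m P N n x \<longleftrightarrow> (\<forall>i<n. x i \<in> P) \<and>
    (\<forall>c. (\<forall>i<n. c i \<in> D) \<longrightarrow> (\<Sum>i<n. c i * x i) \<in> N \<longrightarrow> (\<forall>i<n. c i \<in> m))"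

lemma kdim_eq_Sup: "kdim D m P N = Sup (enat ` {n. \<exists>x. lin_indep_mod D m P N n x})"
  unfolding kdim_def lin_indep_mod_def by (simp add: image_Collect)

lemma lin_indep_mod_le_kdim: "lin_indep_mod D m P N n x \<Longrightarrow> enat n \<le> kdim D m P N"
  unfolding kdim_eq_Sup by (rule Sup_upper) blast

lemma kdim_attained:
  assumes "kdim D m P N \<noteq> \<infinity>"
  shows "\<exists>n x. lin_indep_mod D m P N n x \<and> kdim D m P N = enat n"
proof -
  let ?K = "enat ` {n. \<exists>x. lin_indep_mod D m P N n x}"
  have "lin_indep_mod D m P N 0 x" for x
    unfolding lin_indep_mod_def by simp
  then have "?K \<noteq> {}" by blast
  moreover from this have "finite ?K"
    using assms unfolding kdim_eq_Sup Sup_enat_def by (auto split: if_splits)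
  ultimately have "Sup ?K \<in> ?K"
    unfolding Sup_enat_def by (simp add: Max_in)
  then show ?thesis unfolding kdim_eq_Sup by auto
qed

lemma lin_indep_mod_mono:
  assumes "lin_indep_mod D m P N n x" "\<forall>i<n. x i \<in> P'" "N' \<subseteq> N"
  shows "lin_indep_mod D m P' N' n x"
  using assms unfolding lin_indep_mod_def by blast

lemma lin_indep_mod_mult:
  assumes "valuation a \<nu>" "y \<noteq> 0"
    and "lin_indep_mod D m (Fge a \<nu> u) (Fgt a \<nu> u) n x"
  shows "lin_indep_mod D m (Fge a \<nu> (u + \<nu> y)) (Fgt a \<nu> (u + \<nu> y)) n (\<lambda>i. y * x i)"
proof -
  have "(\<Sum>i<n. c i * (y * x i)) = y * (\<Sum>i<n. c i * x i)" for c
    by (simp add: sum_distrib_left algebra_simps)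
  then show ?thesis
    using assms unfolding lin_indep_mod_def by (simp add: Fge_mult_iff Fgt_mult_iff)
qed

lemma kdim_pos_imp_not_subset:
  assumes "0 \<in> D" "1 \<in> D" "1 \<notin> m" "0 < kdim D m P N"
  shows "\<exists>x \<in> P. x \<notin> N"
proof -
  obtain n x where indep: "lin_indep_mod D m P N n x" and "0 < n"
    using assms(4) unfolding kdim_eq_Sup less_Sup_iff by (auto simp: zero_enat_def)
  define c :: "nat \<Rightarrow> 'a" where "c i = (if i = 0 then 1 else 0)" for i
  have "(\<Sum>i<n. c i * x i) = (\<Sum>i<n. if i = 0 then x i else 0)"
    by (rule sum.cong) (auto simp: c_def)
  also have "\<dots> = x 0"
    using \<open>0 < n\<close> by simp
  finally have "(\<Sum>i<n. c i * x i) = x 0" .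
  moreover have "\<forall>i<n. c i \<in> D" "c 0 \<notin> m"
    using assms(1-3) by (auto simp: c_def)
  ultimately show ?thesis
    using indep \<open>0 < n\<close> unfolding lin_indep_mod_def by metis
qed

lemma nu_h_subset_values:
  assumes "rat_lin_indep a" "0 \<in> D" "1 \<in> D" "1 \<notin> m" "1 \<le> h"
  shows "nu_h a \<nu> D m h M \<subseteq> \<nu> ` (M - {0})"
proof
  fix w
  assume "w \<in> nu_h a \<nu> D m h M"
  moreover have "0 < enat h" using assms(5) by (simp add: zero_enat_def)
  ultimately have "0 < kdim D m (M \<inter> Fge a \<nu> w) (M \<inter> Fgt a \<nu> w)"
    unfolding nu_h_def using less_le_trans by blast
  then obtain x where "x \<in> M" "x \<noteq> 0" "lf a w = lf a (\<nu> x)"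
    using kdim_pos_imp_not_subset[OF assms(2-4)] by (force simp: Fge_def Fgt_def)
  then show "w \<in> \<nu> ` (M - {0})"
    using inj_lf[OF assms(1)] by (auto dest: injD)
qed

lemma shifted_values_subset_nu_h:
  assumes "valuation a \<nu>" "submodule D M"
    and \<theta>: "lin_indep_mod D m (Fge a \<nu> 0) (Fgt a \<nu> 0) n \<theta>"
    and "b \<noteq> 0" "\<forall>i<n. b * \<theta> i \<in> D" "h \<le> n"
  shows "(\<lambda>w. w + \<nu> b) ` \<nu> ` (M - {0}) \<subseteq> nu_h a \<nu> D m h M"
proof
  fix z
  assume "z \<in> (\<lambda>w. w + \<nu> b) ` \<nu> ` (M - {0})"
  then obtain x where "x \<in> M" "x \<noteq> 0" and z: "z = \<nu> x + \<nu> b" by blast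
  then have "\<nu> (x * b) = \<nu> x + \<nu> b"
    using assms(1,4) by (simp add: valuation_mult)
  then have indep: "lin_indep_mod D m (Fge a \<nu> (\<nu> x + \<nu> b)) (Fgt a \<nu> (\<nu> x + \<nu> b)) n (\<lambda>i. x * b * \<theta> i)"
    using lin_indep_mod_mult[OF assms(1) _ \<theta>, of "x * b"] \<open>x \<noteq> 0\<close> assms(4) by simp
  have "\<forall>i<n. (b * \<theta> i) * x \<in> M"
    using assms(2,5) \<open>x \<in> M\<close> unfolding submodule_def by blast
  then have "\<forall>i<n. x * b * \<theta> i \<in> M \<inter> Fge a \<nu> (\<nu> x + \<nu> b)"
    using indep unfolding lin_indep_mod_def by (simp add: ac_simps)
  then have "lin_indep_mod D m (M \<inter> Fge a \<nu> (\<nu> x + \<nu> b)) (M \<inter> Fgt a \<nu> (\<nu> x + \<nu> b)) n (\<lambda>i. x * b * \<theta> i)"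
    by (intro lin_indep_mod_mono[OF indep]) auto
  then have "enat n \<le> kdim D m (M \<inter> Fge a \<nu> (\<nu> x + \<nu> b)) (M \<inter> Fgt a \<nu> (\<nu> x + \<nu> b))"
    by (rule lin_indep_mod_le_kdim)
  moreover have "enat h \<le> enat n" using assms(6) by simp
  ultimately show "z \<in> nu_h a \<nu> D m h M"
    unfolding nu_h_def z by (simp add: order_trans[rotated])
qed

theorem mainTheorem11:
  fixes D m :: "'f::field set" and a :: "real^'d" and \<nu> :: "'f \<Rightarrow> int^'d"
  assumes "subring D" and "is_fraction_field_of D"
    and "noetherian D" and "local_ring D" and "maximal_ideal D m"
    and "krull_dim D = enat CARD('d)"
    and "rat_lin_indep a"
    and "valuation a \<nu>"
    and "OK_valuation a \<nu> D m"
  shows "\<exists>u \<in> \<nu> ` (D - {0}). \<forall>M h. submodule D M \<longrightarrow> 1 \<le> h \<longrightarrow> enat h \<le> res_deg a \<nu> D m \<longrightarrow>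
           ((\<lambda>w. w + u) ` \<nu> ` (M - {0}) \<subseteq> nu_h a \<nu> D m h M \<and> nu_h a \<nu> D m h M \<subseteq> \<nu> ` (M - {0}))"
proof -
  have "res_deg a \<nu> D m < \<infinity>"
    using assms(9) unfolding OK_valuation_def by blast
  then obtain n \<theta> where \<theta>: "lin_indep_mod D m (Fge a \<nu> 0) (Fgt a \<nu> 0) n \<theta>"
    and deg: "res_deg a \<nu> D m = enat n"
    using kdim_attained unfolding res_deg_def by (metis less_irrefl)
  obtain b where b: "b \<in> D" "b \<noteq> 0" "\<forall>i<n. b * \<theta> i \<in> D"
    using common_denominator[OF assms(1,2), of "\<theta> ` {..<n}"] by auto
  have "0 \<in> D" "1 \<in> D"
    using assms(1) by (auto simp: subring_def)
  have "1 \<notin> m"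
    using one_not_in_maximal_ideal assms(1,5) .
  show ?thesis
  proof (intro bexI[of _ "\<nu> b"] allI impI conjI)
    fix M h
    assume M: "submodule D M" and "1 \<le> h" and "enat h \<le> res_deg a \<nu> D m"
    then have "h \<le> n" using deg by simp
    then show "(\<lambda>w. w + \<nu> b) ` \<nu> ` (M - {0}) \<subseteq> nu_h a \<nu> D m h M"
      by (rule shifted_values_subset_nu_h[OF assms(8) M \<theta> b(2,3)])
    show "nu_h a \<nu> D m h M \<subseteq> \<nu> ` (M - {0})"
      by (rule nu_h_subset_values[OF assms(7) \<open>0 \<in> D\<close> \<open>1 \<in> D\<close> \<open>1 \<notin> m\<close> \<open>1 \<le> h\<close>])
  next
    show "\<nu> b \<in> \<nu> ` (D - {0})" using b by blast
  qed
qed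

end
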